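(* Let $G_0$ and $A_0$ be bounded selfadjoint operators in $\mathcal H$ with $G_0A_0G_0\ge0$, and let $[x,y]:=(G_0x,y)$. Then the bounded $G_0$-symmetric operator $A_0G_0$ satisfies: (i) $\sigma(A_0G_0)\subset\mathbb R$; (ii) $(0,\infty)\cap\sigma(A_0G_0)\subset\sigma_{++}(A_0G_0)$; (iii) $(-\infty,0)\cap\sigma(A_0G_0)\subset\sigma_{--}(A_0G_0)$.
   Context: $(\mathcal H,(\cdot,\cdot))$ complex Hilbert space. $\sigma(S)$ is the spectrum; $\sigma_{ap}(S)$ is the set of $\lambda$ with a sequence $(x_n)$, $\|x_n\|=1$, $(S-\lambda)x_n\to0$. For an operator $T$ symmetric w.r.t. $[\cdot,\cdot]$, $\sigma_{++}(T)$ ($\sigma_{--}(T)$) is the set of $\lambda\in\sigma_{ap}(T)$ such that every $(x_n)\subset\operatorname{dom}T$ with $\|x_n\|=1$, $(T-\lambda)x_n\to0$ satisfies $\liminf_n[x_n,x_n]>0$ (resp. $\limsup_n[x_n,x_n]<0$). *)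

theory Defs
  imports "HOL-Analysis.Analysis"
begin

text \<open>Complex Hilbert spaces (HOL-Analysis only has real inner product spaces).\<close>

class complex_hilbert = banach +
  fixes scaleC :: "complex \<Rightarrow> 'a \<Rightarrow> 'a" (infixr "*\<^sub>C" 75)
    and cinner :: "'a \<Rightarrow> 'a \<Rightarrow> complex"
  assumes scaleC_add_right: "a *\<^sub>C (x + y) = a *\<^sub>C x + a *\<^sub>C y"
    and scaleC_add_left: "(a + b) *\<^sub>C x = a *\<^sub>C x + b *\<^sub>C x"
    and scaleC_scaleC: "a *\<^sub>C (b *\<^sub>C x) = (a * b) *\<^sub>C x"
    and scaleC_one: "1 *\<^sub>C x = x"
    and scaleR_scaleC: "scaleR r x = complex_of_real r *\<^sub>C x"
    and cinner_add_left: "cinner (x + y) z = cinner x z + cinner y z"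
    and cinner_scaleC_left: "cinner (a *\<^sub>C x) y = a * cinner x y"
    and cinner_commute: "cinner y x = cnj (cinner x y)"
    and norm_eq_sqrt_cinner: "norm x = sqrt (Re (cinner x x))"

definition bounded_op :: "('a::complex_hilbert \<Rightarrow> 'a) \<Rightarrow> bool" where
  "bounded_op T \<longleftrightarrow> (\<forall>x y. T (x + y) = T x + T y) \<and> (\<forall>a x. T (a *\<^sub>C x) = a *\<^sub>C T x)
     \<and> (\<exists>K. \<forall>x. norm (T x) \<le> K * norm x)"

definition selfadjoint :: "('a::complex_hilbert \<Rightarrow> 'a) \<Rightarrow> bool" where
  "selfadjoint T \<longleftrightarrow> bounded_op T \<and> (\<forall>x y. cinner (T x) y = cinner x (T y))"

definition nonneg_op :: "('a::complex_hilbert \<Rightarrow> 'a) \<Rightarrow> bool" where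
  "nonneg_op T \<longleftrightarrow> (\<forall>x. cinner (T x) x \<in> \<real> \<and> 0 \<le> Re (cinner (T x) x))"

definition op_spectrum :: "('a::complex_hilbert \<Rightarrow> 'a) \<Rightarrow> complex set" where
  "op_spectrum S = {l. \<not> (\<exists>R. bounded_op R \<and> (\<forall>x. R (S x - l *\<^sub>C x) = x)
                                        \<and> (\<forall>x. S (R x) - l *\<^sub>C R x = x))}"

definition ap_spectrum :: "('a::complex_hilbert \<Rightarrow> 'a) \<Rightarrow> complex set" where
  "ap_spectrum S = {l. \<exists>x::nat \<Rightarrow> 'a. (\<forall>n. norm (x n) = 1)
                        \<and> (\<lambda>n. S (x n) - l *\<^sub>C x n) \<longlonglongrightarrow> 0}"

text \<open>Spectral points of positive / negative type with respect to the form
  [x,y] = (G x, y); here [x,x] is represented by its real part (it is real for selfadjoint G).\<close>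
definition sigma_pp :: "('a::complex_hilbert \<Rightarrow> 'a) \<Rightarrow> ('a \<Rightarrow> 'a) \<Rightarrow> complex set" where
  "sigma_pp G T = {l \<in> ap_spectrum T. \<forall>x::nat \<Rightarrow> 'a.
       (\<forall>n. norm (x n) = 1) \<and> (\<lambda>n. T (x n) - l *\<^sub>C x n) \<longlonglongrightarrow> 0
       \<longrightarrow> liminf (\<lambda>n. ereal (Re (cinner (G (x n)) (x n)))) > 0}"

definition sigma_mm :: "('a::complex_hilbert \<Rightarrow> 'a) \<Rightarrow> ('a \<Rightarrow> 'a) \<Rightarrow> complex set" where
  "sigma_mm G T = {l \<in> ap_spectrum T. \<forall>x::nat \<Rightarrow> 'a.
       (\<forall>n. norm (x n) = 1) \<and> (\<lambda>n. T (x n) - l *\<^sub>C x n) \<longlonglongrightarrow> 0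
       \<longrightarrow> limsup (\<lambda>n. ereal (Re (cinner (G (x n)) (x n)))) < 0}"

end

theory Submission
  imports Defs
begin

text \<open>
  The key estimate concerns unit approximate eigenvectors x n of T at l \<noteq> 0,
  i.e. A G x n = l x n + e n with e n tending to 0.  Then
    (G A G x n, x n) = l [x n, x n] + (e n, G x n),
  and the left-hand side is nonnegative and bounded away from zero, because
  |l|^2 is bounded by the norms of G A G x n and e n, while the norm of G A G x n
  is controlled by (G A G x n, x n) (Cauchy-Schwarz for a nonnegative operator).
  Hence l [x n, x n] eventually has real part above a fixed \<delta> > 0 and
  vanishing imaginary part.  For non-real l this is impossible since [x n, x n]
  is real; for real l it gives the sign of [x n, x n], i.e. the spectral type.

  To pass from the approximate point spectrum to the spectrum we prove the
  standard criterion: if T - l is bounded below and the adjoint G A - cnj l is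
  injective, then T - l is invertible (the range of T - l is closed, by a
  minimizing-sequence argument, and dense).  For l \<noteq> 0 injectivity of
  G A - cnj l follows from cnj l not being in the approximate point spectrum.
\<close>

subsection \<open>Algebra of complex Hilbert spaces\<close>

lemma scaleC_zero_left[simp]: "(0::complex) *\<^sub>C (x::'a::complex_hilbert) = 0"
  by (metis scaleR_scaleC of_real_0 scaleR_zero_left)

lemma scaleC_zero_right[simp]: "a *\<^sub>C (0::'a::complex_hilbert) = 0"
  by (metis add_cancel_right_right scaleC_add_right add_0)

lemma scaleC_minus_right: "a *\<^sub>C (- x::'a::complex_hilbert) = - (a *\<^sub>C x)"
  by (metis scaleC_add_right add.right_inverse scaleC_zero_right eq_neg_iff_add_eq_0)

lemma scaleC_diff_right: "a *\<^sub>C (x - y::'a::complex_hilbert) = a *\<^sub>C x - a *\<^sub>C y"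
  by (metis diff_conv_add_uminus scaleC_add_right scaleC_minus_right)

lemma scaleR_scaleC_comm: "r *\<^sub>R (a *\<^sub>C (x::'a::complex_hilbert)) = a *\<^sub>C (r *\<^sub>R x)"
  by (simp add: scaleR_scaleC scaleC_scaleC mult.commute)

lemma cinner_zero_left[simp]: "cinner (0::'a::complex_hilbert) y = 0"
  by (metis add_0 add_cancel_right_right cinner_add_left)

lemma cinner_zero_right[simp]: "cinner (x::'a::complex_hilbert) 0 = 0"
  by (metis cinner_commute cinner_zero_left complex_cnj_zero)

lemma cinner_minus_left: "cinner (- x::'a::complex_hilbert) y = - cinner x y"
  by (metis add.right_inverse cinner_add_left cinner_zero_left eq_neg_iff_add_eq_0)

lemma cinner_diff_left: "cinner (x - z::'a::complex_hilbert) y = cinner x y - cinner z y"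
  by (metis diff_conv_add_uminus cinner_add_left cinner_minus_left)

lemma cinner_add_right: "cinner (x::'a::complex_hilbert) (y + z) = cinner x y + cinner x z"
  by (metis cinner_commute cinner_add_left complex_cnj_add)

lemma cinner_scaleC_right: "cinner (x::'a::complex_hilbert) (a *\<^sub>C y) = cnj a * cinner x y"
  by (metis cinner_commute cinner_scaleC_left complex_cnj_mult)

lemma cinner_minus_right: "cinner (x::'a::complex_hilbert) (- y) = - cinner x y"
  by (metis cinner_commute cinner_minus_left complex_cnj_minus)

lemma cinner_diff_right: "cinner (x::'a::complex_hilbert) (y - z) = cinner x y - cinner x z"
  by (metis diff_conv_add_uminus cinner_add_right cinner_minus_right)

lemma cinner_scaleR_left: "cinner (r *\<^sub>R x::'a::complex_hilbert) y = of_real r * cinner x y"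
  by (simp add: scaleR_scaleC cinner_scaleC_left)

lemma cinner_scaleR_right: "cinner (x::'a::complex_hilbert) (r *\<^sub>R y) = of_real r * cinner x y"
  by (simp add: scaleR_scaleC cinner_scaleC_right)

lemma cinner_self_Im: "Im (cinner (x::'a::complex_hilbert) x) = 0"
  by (metis cinner_commute cnj.sel(2) equation_minus_iff neg_equal_zero)

lemma cinner_self_Re_nonneg: "0 \<le> Re (cinner (x::'a::complex_hilbert) x)"
  by (metis norm_eq_sqrt_cinner norm_ge_zero real_sqrt_ge_0_iff)

lemma norm_sq_cinner: "(norm (x::'a::complex_hilbert))^2 = Re (cinner x x)"
  by (simp add: norm_eq_sqrt_cinner cinner_self_Re_nonneg)

lemma cinner_self: "cinner (x::'a::complex_hilbert) x = of_real ((norm x)^2)"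
  by (simp add: norm_sq_cinner complex_eq_iff cinner_self_Im)

lemma norm_add_sq: "(norm (x + y::'a::complex_hilbert))^2 = (norm x)^2 + 2 * Re (cinner x y) + (norm y)^2"
proof -
  have "Re (cinner y x) = Re (cinner x y)" by (subst cinner_commute) simp
  then show ?thesis
    by (simp add: norm_sq_cinner cinner_add_left cinner_add_right)
qed

lemma parallelogram: "(norm (x + y::'a::complex_hilbert))^2 + (norm (x - y))^2 = 2 * (norm x)^2 + 2 * (norm y)^2"
  using norm_add_sq[of x y] norm_add_sq[of x "-y"]
  by (simp add: cinner_minus_right)

lemma Re_cinner_le: "\<bar>Re (cinner (x::'a::complex_hilbert) y)\<bar> \<le> norm x * norm y"
proof (cases "y = 0")
  case True then show ?thesis by simp
next
  case False
  define a where "a = Re (cinner x y)"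
  define t where "t = - a / (norm y)^2"
  have ny: "(norm y)^2 > 0" using False by simp
  have "0 \<le> (norm (x + t *\<^sub>R y))^2" by simp
  also have "\<dots> = (norm x)^2 + 2 * t * a + t^2 * (norm y)^2"
    by (simp add: norm_add_sq cinner_scaleR_right a_def power_mult_distrib)
  also have "\<dots> = (norm x)^2 - a^2 / (norm y)^2"
    using ny by (simp add: t_def field_simps power2_eq_square)
  finally have "a^2 \<le> (norm x)^2 * (norm y)^2" using ny by (simp add: field_simps)
  then have "a^2 \<le> (norm x * norm y)^2" by (simp add: power_mult_distrib)
  then show ?thesis unfolding a_def
    using abs_le_square_iff[of "Re (cinner x y)" "norm x * norm y"] by simp
qed

lemma norm_scaleC: "norm (a *\<^sub>C (x::'a::complex_hilbert)) = cmod a * norm x"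
proof -
  have "(norm (a *\<^sub>C x))^2 = Re (a * cnj a * cinner x x)"
    by (simp add: norm_sq_cinner cinner_scaleC_left cinner_scaleC_right mult.assoc mult.left_commute)
  also have "\<dots> = (cmod a)^2 * (norm x)^2"
    by (simp add: cinner_self complex_mult_cnj cmod_power2)
  finally have "(norm (a *\<^sub>C x))^2 = (cmod a * norm x)^2" by (simp add: power_mult_distrib)
  then show ?thesis by (simp add: power2_eq_iff_nonneg)
qed

text \<open>Cauchy-Schwarz: rotate x by a unimodular factor w making the inner product
  real and nonnegative, then apply the real-part estimate.\<close>

lemma cinner_Cauchy_Schwarz: "cmod (cinner (x::'a::complex_hilbert) y) \<le> norm x * norm y"
proof (cases "cinner x y = 0")
  case True then show ?thesis by simp
next
  case False
  define c where "c = cinner x y"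
  define w where "w = cnj c / of_real (cmod c)"
  have unimodular: "cmod w = 1" using False unfolding w_def c_def by (simp add: norm_divide)
  have "cinner (w *\<^sub>C x) y = (c * cnj c) / of_real (cmod c)"
    by (simp add: cinner_scaleC_left w_def c_def)
  also have "c * cnj c = of_real ((cmod c)^2)" by (simp add: complex_mult_cnj cmod_power2)
  finally have "cmod c = Re (cinner (w *\<^sub>C x) y)" using False by (simp add: c_def power2_eq_square)
  also have "\<dots> \<le> norm (w *\<^sub>C x) * norm y" by (rule order_trans[OF abs_ge_self Re_cinner_le])
  also have "\<dots> = norm x * norm y" by (simp add: norm_scaleC unimodular)
  finally show ?thesis by (simp add: c_def)
qed

lemma bounded_op_add: "bounded_op T \<Longrightarrow> T (x + y) = T x + T y"
  unfolding bounded_op_def by blast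

lemma bounded_op_scaleC: "bounded_op T \<Longrightarrow> T (a *\<^sub>C x) = a *\<^sub>C T x"
  unfolding bounded_op_def by blast

lemma bounded_op_scaleR: "bounded_op (T::'a::complex_hilbert \<Rightarrow> 'a) \<Longrightarrow> T (r *\<^sub>R x) = r *\<^sub>R T x"
  by (simp add: scaleR_scaleC bounded_op_scaleC)

lemma bounded_op_bounded_linear:
  assumes "bounded_op (T::'a::complex_hilbert \<Rightarrow> 'a)"
  shows "bounded_linear T"
proof -
  obtain K where K: "\<forall>x. norm (T x) \<le> K * norm x" using assms unfolding bounded_op_def by blast
  show ?thesis
    by (rule bounded_linear_intro[where K=K])
      (use K assms bounded_op_add bounded_op_scaleR in \<open>auto simp: mult.commute\<close>)
qed

lemma bounded_op_comp:
  assumes A: "bounded_op (A::'a::complex_hilbert \<Rightarrow> 'a)" and G: "bounded_op G"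
  shows "bounded_op (A \<circ> G)"
proof -
  interpret bounded_linear "A \<circ> G" unfolding comp_def
    by (rule bounded_linear_compose[OF bounded_op_bounded_linear[OF A] bounded_op_bounded_linear[OF G]])
  obtain K where "\<And>x. norm ((A \<circ> G) x) \<le> norm x * K" using bounded by blast
  then show ?thesis unfolding bounded_op_def
    using add A G by (auto simp: bounded_op_scaleC mult.commute)
qed

lemma selfadjoint_bounded_op: "selfadjoint T \<Longrightarrow> bounded_op T"
  unfolding selfadjoint_def by blast

lemma selfadjoint_sym: "selfadjoint T \<Longrightarrow> cinner (T x) y = cinner x (T y)"
  unfolding selfadjoint_def by blast

lemma selfadjoint_form_real: "selfadjoint T \<Longrightarrow> Im (cinner (T x) x) = 0"
  by (metis cinner_commute selfadjoint_sym cnj.sel(2) equation_minus_iff neg_equal_zero)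

subsection \<open>An invertibility criterion\<close>

lemma not_ap_spectrum_bounded_below:
  assumes T: "bounded_op (T::'a::complex_hilbert \<Rightarrow> 'a)" and nap: "l \<notin> ap_spectrum T"
  shows "\<exists>c>0. \<forall>x. c * norm x \<le> norm (T x - l *\<^sub>C x)"
proof (rule ccontr)
  assume "\<not> ?thesis"
  then have "\<forall>n::nat. \<exists>x. norm (T x - l *\<^sub>C x) < (1 / real (Suc n)) * norm x"
    by (metis not_le of_nat_0_less_iff zero_less_Suc zero_less_divide_1_iff)
  then obtain x where x: "\<And>n. norm (T (x n) - l *\<^sub>C x n) < (1 / real (Suc n)) * norm (x n)"
    by metis
  have nz: "x n \<noteq> 0" for n using x[of n] by (auto simp: bounded_op_bounded_linear[OF T] linear_simps)
  define y where "y n = (1 / norm (x n)) *\<^sub>R x n" for n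
  have unit: "norm (y n) = 1" for n using nz by (simp add: y_def)
  have "norm (T (y n) - l *\<^sub>C y n) = norm (T (x n) - l *\<^sub>C x n) / norm (x n)" for n
    by (simp add: y_def bounded_op_scaleR[OF T] scaleR_scaleC_comm[symmetric]
        flip: scaleR_diff_right)
  also have "norm (T (x n) - l *\<^sub>C x n) / norm (x n) < 1 / real (Suc n)" for n
    using x[of n] nz by (simp add: pos_divide_less_eq)
  finally have "norm (T (y n) - l *\<^sub>C y n) < 1 / real (Suc n)" for n .
  then have "(\<lambda>n. T (y n) - l *\<^sub>C y n) \<longlonglongrightarrow> 0" by (rule LIMSEQ_norm_0)
  then show False using nap unit unfolding ap_spectrum_def by blast
qed

lemma Cauchy_if_dist_le_null:
  fixes X :: "nat \<Rightarrow> 'a::metric_space"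
  assumes le: "\<And>m n. dist (X m) (X n) \<le> B m + B n" and B: "B \<longlonglongrightarrow> 0"
  shows "Cauchy X"
proof (rule metric_CauchyI)
  fix e :: real assume "0 < e"
  then have "eventually (\<lambda>n. B n < e / 2) sequentially"
    using B by (intro order_tendstoD) auto
  then obtain M where M: "\<And>n. n \<ge> M \<Longrightarrow> B n < e / 2" by (auto simp: eventually_sequentially)
  show "\<exists>M. \<forall>m\<ge>M. \<forall>n\<ge>M. dist (X m) (X n) < e"
    using le M by (intro exI[of _ M]) (smt (verit, best) field_sum_of_halves)
qed

lemma parallelogram_midpoint:
  assumes "d \<le> (norm ((1/2) *\<^sub>R (a + b::'a::complex_hilbert)))^2"
  shows "(norm (a - b))^2 \<le> 2 * ((norm a)^2 - d) + 2 * ((norm b)^2 - d)"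
proof -
  have "(norm (a + b))^2 = 4 * (norm ((1/2) *\<^sub>R (a + b)))^2"
    by (simp add: power_mult_distrib power2_eq_square)
  then show ?thesis using parallelogram[of a b] assms by simp
qed

lemma bounded_below_minimizing_Cauchy:
  fixes L :: "'a::complex_hilbert \<Rightarrow> 'a"
  assumes L: "bounded_linear L" and c: "c > 0" and below: "\<And>x. c * norm x \<le> norm (L x)"
    and inf: "\<And>z. d \<le> (norm (L z - y))^2"
    and xs: "\<And>k. (norm (L (xs k) - y))^2 < d + 1 / real (Suc k)"
  shows "Cauchy xs"
proof (rule Cauchy_if_dist_le_null)
  interpret L: bounded_linear L by fact
  fix m n
  define a where "a = L (xs m) - y"
  define b where "b = L (xs n) - y"
  have "a + b = L (xs m + xs n) - (y + y)" by (simp add: a_def b_def L.add)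
  then have "(1/2) *\<^sub>R (a + b) = L ((1/2) *\<^sub>R (xs m + xs n)) - y"
    by (simp add: L.scaleR scaleR_diff_right)
  then have "(norm (a - b))^2 \<le> 2 * ((norm a)^2 - d) + 2 * ((norm b)^2 - d)"
    using inf by (intro parallelogram_midpoint) simp
  also have "\<dots> \<le> 2 / real (Suc m) + 2 / real (Suc n)"
    using xs[of m] xs[of n] by (simp add: a_def b_def)
  finally have ab: "(norm (a - b))^2 \<le> 2 / real (Suc m) + 2 / real (Suc n)" .
  have "c * dist (xs m) (xs n) \<le> norm (a - b)"
    using below[of "xs m - xs n"] by (simp add: a_def b_def dist_norm L.diff)
  also have "\<dots> \<le> sqrt (2 / real (Suc m) + 2 / real (Suc n))"
    using ab by (simp add: real_le_rsqrt)
  also have "\<dots> \<le> sqrt (2 / real (Suc m)) + sqrt (2 / real (Suc n))"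
    by (rule sqrt_add_le_add_sqrt) auto
  finally show "dist (xs m) (xs n) \<le> sqrt (2 / real (Suc m)) / c + sqrt (2 / real (Suc n)) / c"
    using c by (simp add: field_simps)
next
  have "(\<lambda>k. sqrt (2 * inverse (real (Suc k))) / c) \<longlonglongrightarrow> sqrt (2 * 0) / c"
    by (intro tendsto_intros LIMSEQ_inverse_real_of_nat) (use c in simp)
  then show "(\<lambda>k. sqrt (2 / real (Suc k)) / c) \<longlonglongrightarrow> 0" by (simp add: divide_inverse)
qed

lemma bounded_below_closest_point:
  fixes L :: "'a::complex_hilbert \<Rightarrow> 'a"
  assumes L: "bounded_linear L" and c: "c > 0" and below: "\<And>x. c * norm x \<le> norm (L x)"
  shows "\<exists>x0. \<forall>z. norm (L x0 - y) \<le> norm (L z - y)"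
proof -
  interpret L: bounded_linear L by fact
  define D where "D = range (\<lambda>x. (norm (L x - y))^2)"
  define d where "d = Inf D"
  have bdd: "bdd_below D" unfolding D_def by (rule bdd_belowI[where m=0]) auto
  have inf: "d \<le> (norm (L z - y))^2" for z
    unfolding d_def by (rule cInf_lower) (use bdd in \<open>auto simp: D_def\<close>)
  have "\<exists>x. (norm (L x - y))^2 < d + 1 / real (Suc k)" for k :: nat
    using cInf_less_iff[of D "d + 1 / real (Suc k)"] bdd unfolding d_def D_def by auto
  then obtain xs where xs: "\<And>k. (norm (L (xs k) - y))^2 < d + 1 / real (Suc k)" by metis
  have "Cauchy xs" by (rule bounded_below_minimizing_Cauchy[OF L c below inf xs])
  then obtain x0 where x0: "xs \<longlonglongrightarrow> x0" using Cauchy_convergent_iff convergent_def by blast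
  have "(\<lambda>k. (norm (L (xs k) - y))^2) \<longlonglongrightarrow> (norm (L x0 - y))^2"
    by (intro tendsto_intros L.tendsto x0)
  moreover have "(\<lambda>k. d + inverse (real (Suc k))) \<longlonglongrightarrow> d + 0"
    by (intro tendsto_intros LIMSEQ_inverse_real_of_nat)
  ultimately have "(norm (L x0 - y))^2 \<le> d"
    using xs by (intro LIMSEQ_le) (auto simp: inverse_eq_divide less_imp_le)
  then have "(norm (L x0 - y))^2 \<le> (norm (L z - y))^2" for z using inf[of z] by linarith
  then show ?thesis by (auto simp: power2_le_iff_abs_le)
qed

lemma norm_minimal_orthogonal:
  fixes r u :: "'a::complex_hilbert"
  assumes min: "\<And>t::real. norm r \<le> norm (r + t *\<^sub>R u)"
  shows "Re (cinner r u) = 0"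
proof -
  define a where "a = Re (cinner r u)"
  define W where "W = (norm u)^2 + 1"
  define t where "t = - a / W"
  have W: "W > 0" by (simp add: W_def add_nonneg_pos)
  have "(norm r)^2 \<le> (norm (r + t *\<^sub>R u))^2" using min[of t] by simp
  then have "0 \<le> 2 * t * a + t^2 * (W - 1)"
    by (simp add: norm_add_sq cinner_scaleR_right power_mult_distrib a_def W_def)
  then have "0 \<le> (2 * t * a + t^2 * (W - 1)) * W^2" using W by simp
  also have "\<dots> = - (a^2 * (W + 1))"
    using W by (simp add: t_def field_simps power2_eq_square)
  finally have "a^2 \<le> 0" using W by (simp add: mult_le_0_iff)
  then show ?thesis by (simp add: a_def)
qed

lemma bounded_below_surjective:
  fixes L :: "'a::complex_hilbert \<Rightarrow> 'a"
  assumes L: "bounded_linear L" and LC: "\<And>a x. L (a *\<^sub>C x) = a *\<^sub>C L x"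
    and c: "c > 0" and below: "\<And>x. c * norm x \<le> norm (L x)"
    and dense: "\<And>r. (\<And>z. cinner r (L z) = 0) \<Longrightarrow> r = 0"
  shows "surj L"
proof -
  interpret L: bounded_linear L by fact
  have "y \<in> range L" for y
  proof -
    obtain x0 where x0: "\<And>z. norm (L x0 - y) \<le> norm (L z - y)"
      using bounded_below_closest_point[OF L c below] by blast
    define r where "r = L x0 - y"
    have Re0: "Re (cinner r (L z)) = 0" for z
    proof (rule norm_minimal_orthogonal)
      show "norm r \<le> norm (r + t *\<^sub>R L z)" for t
        using x0[of "x0 + t *\<^sub>R z"] by (simp add: r_def L.add L.scaleR algebra_simps)
    qed
    have "cinner r (L z) = 0" for z
      using Re0[of z] Re0[of "\<i> *\<^sub>C z"] by (simp add: LC cinner_scaleC_right complex_eq_iff)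
    then have "r = 0" by (rule dense)
    then show ?thesis by (auto simp: r_def)
  qed
  then show ?thesis by blast
qed

lemma not_in_spectrum_if_bounded_below:
  fixes T S :: "'a::complex_hilbert \<Rightarrow> 'a"
  assumes T: "bounded_op T" and adj: "\<And>x y. cinner (T x) y = cinner x (S y)"
    and c: "c > 0" and below: "\<And>x. c * norm x \<le> norm (T x - l *\<^sub>C x)"
    and ker: "\<And>y. S y = cnj l *\<^sub>C y \<Longrightarrow> y = 0"
  shows "l \<notin> op_spectrum T"
proof -
  define L where "L x = T x - l *\<^sub>C x" for x
  have scale: "bounded_linear (\<lambda>x::'a. l *\<^sub>C x)"
    by (rule bounded_linear_intro[where K="cmod l"])
      (auto simp: scaleC_add_right scaleR_scaleC_comm norm_scaleC)
  have Lbl: "bounded_linear L"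
    unfolding L_def by (rule bounded_linear_sub[OF bounded_op_bounded_linear[OF T] scale])
  interpret L: bounded_linear L by fact
  have LC: "L (a *\<^sub>C x) = a *\<^sub>C L x" for a x
    by (simp add: L_def bounded_op_scaleC[OF T] scaleC_scaleC scaleC_diff_right mult.commute)
  have inj: "x = x'" if "L x = L x'" for x x'
  proof -
    have "c * norm (x - x') \<le> 0" using below[of "x - x'"] that by (simp add: L_def[symmetric] L.diff)
    then show ?thesis using c by (simp add: mult_le_0_iff)
  qed
  have "surj L"
  proof (rule bounded_below_surjective[OF Lbl LC c below[folded L_def]])
    fix r assume orth: "\<And>z. cinner r (L z) = 0"
    define w where "w = S r - cnj l *\<^sub>C r"
    have "cinner (L z) r = cinner z w" for z
      by (simp add: L_def w_def adj cinner_diff_left cinner_diff_right cinner_scaleC_left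
          cinner_scaleC_right)
    moreover have "cinner (L z) r = 0" for z using orth[of z] by (subst cinner_commute) simp
    ultimately have "cinner w w = 0" by metis
    then show "r = 0" using ker by (simp add: cinner_self w_def)
  qed
  define R where "R y = (THE x. L x = y)" for y
  have LR: "L (R y) = y" for y
    unfolding R_def by (rule theI') (use \<open>surj L\<close> inj in \<open>metis surjD\<close>)
  have RL: "R (L x) = x" for x using LR inj by blast
  have "bounded_op R" unfolding bounded_op_def
  proof (intro conjI allI exI)
    show "R (x + y) = R x + R y" for x y by (rule inj) (simp add: LR L.add)
    show "R (a *\<^sub>C x) = a *\<^sub>C R x" for a x by (rule inj) (simp add: LR LC)
    show "norm (R x) \<le> (1 / c) * norm x" for x
      using below[of "R x"] LR[of x] c by (simp add: L_def field_simps)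
  qed
  then show ?thesis unfolding op_spectrum_def using LR RL unfolding L_def by blast
qed

subsection \<open>Nonnegative symmetric operators\<close>

text \<open>Cauchy-Schwarz for the semi-inner product (P x, y) of a nonnegative symmetric
  bounded operator P with bound K: the norm of P x is controlled by the quadratic form.\<close>

lemma nonneg_sym_norm_sq_le:
  fixes P :: "'a::complex_hilbert \<Rightarrow> 'a"
  assumes P: "bounded_linear P" and sym: "\<And>x y. cinner (P x) y = cinner x (P y)"
    and K: "K > 0" and bound: "\<And>x. norm (P x) \<le> norm x * K"
    and nonneg: "\<And>x. 0 \<le> Re (cinner (P x) x)"
  shows "(norm (P x))^2 \<le> K * Re (cinner (P x) x)"
proof -
  interpret P: bounded_linear P by fact
  define s where "s = 1 / K"
  define N where "N = (norm (P x))^2"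
  define M where "M = Re (cinner (P (P x)) (P x))"
  define Q where "Q = Re (cinner (P x) x)"
  have PP: "cinner (P (P x)) x = cinner (P x) (P x)" by (rule sym)
  have N: "Re (cinner (P x) (P x)) = norm (P x) * norm (P x)"
    using norm_sq_cinner[of "P x"] by (simp add: power2_eq_square)
  have "Re (cinner (P (x - s *\<^sub>R P x)) (x - s *\<^sub>R P x)) = Q - 2 * s * N + s^2 * M"
    by (simp add: P.diff P.scaleR cinner_diff_left cinner_diff_right cinner_scaleR_left
        cinner_scaleR_right PP N Q_def N_def M_def power2_eq_square algebra_simps)
  then have 0: "0 \<le> Q - 2 * s * N + s^2 * M" using nonneg[of "x - s *\<^sub>R P x"] by simp
  have "M \<le> norm (P (P x)) * norm (P x)" unfolding M_def using Re_cinner_le abs_ge_self order_trans by blast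
  also have "\<dots> \<le> (norm (P x) * K) * norm (P x)" using bound by (simp add: mult_right_mono)
  finally have "M \<le> K * N" by (simp add: N_def power2_eq_square algebra_simps)
  then have "s^2 * M \<le> s^2 * (K * N)" by (simp add: mult_left_mono)
  then have "0 \<le> Q - 2 * s * N + s^2 * (K * N)" using 0 by linarith
  also have "\<dots> = Q - N / K" using K by (simp add: s_def field_simps power2_eq_square)
  finally show ?thesis using K by (simp add: N_def Q_def field_simps)
qed

subsection \<open>Approximate eigenvectors of A G\<close>

lemma form_defect_identity:
  assumes "selfadjoint (G::'a::complex_hilbert \<Rightarrow> 'a)"
  shows "cinner (G (A (G x))) x = l * cinner (G x) x + cinner (A (G x) - l *\<^sub>C x) (G x)"
proof -
  have "cinner (G (A (G x))) x = cinner (l *\<^sub>C x + (A (G x) - l *\<^sub>C x)) (G x)"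
    using selfadjoint_sym[OF assms] by simp
  then show ?thesis by (simp only: cinner_add_left cinner_scaleC_left selfadjoint_sym[OF assms])
qed

lemma eigen_defect_lower_bound:
  fixes G A :: "'a::complex_hilbert \<Rightarrow> 'a"
  assumes G: "bounded_op G" and KA: "\<And>x. norm (A x) \<le> norm x * KA" and KA0: "KA \<ge> 0"
    and KG: "\<And>x. norm (G x) \<le> norm x * KG" and unit: "norm x = 1"
  shows "(cmod l)^2 \<le> KA * (norm (G (A (G x))) + KG * norm (A (G x) - l *\<^sub>C x))
           + cmod l * norm (A (G x) - l *\<^sub>C x)"
proof -
  interpret G: bounded_linear G by (rule bounded_op_bounded_linear[OF G])
  define e where "e = A (G x) - l *\<^sub>C x"
  have "cmod l = norm (A (G x) - e)" using unit by (simp add: e_def norm_scaleC)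
  also have "\<dots> \<le> KA * norm (G x) + norm e"
    using norm_triangle_ineq4[of "A (G x)" e] KA[of "G x"] by (simp add: mult.commute)
  finally have l_le: "cmod l \<le> KA * norm (G x) + norm e" .
  have "l *\<^sub>C G x = G (A (G x)) - G e"
    by (simp add: e_def G.diff bounded_op_scaleC[OF G])
  then have "cmod l * norm (G x) = norm (G (A (G x)) - G e)" by (metis norm_scaleC)
  also have "\<dots> \<le> norm (G (A (G x))) + KG * norm e"
    using norm_triangle_ineq4[of "G (A (G x))" "G e"] KG[of e] by (simp add: mult.commute)
  finally have lG_le: "cmod l * norm (G x) \<le> norm (G (A (G x))) + KG * norm e" .
  have "(cmod l)^2 \<le> cmod l * (KA * norm (G x) + norm e)"
    using l_le by (simp add: power2_eq_square mult_left_mono)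
  also have "\<dots> = KA * (cmod l * norm (G x)) + cmod l * norm e" by (simp add: algebra_simps)
  also have "\<dots> \<le> KA * (norm (G (A (G x))) + KG * norm e) + cmod l * norm e"
    using lG_le KA0 by (simp add: mult_left_mono)
  finally show ?thesis by (simp add: e_def)
qed

lemma approx_eigen_form_bounded_away:
  fixes G A :: "'a::complex_hilbert \<Rightarrow> 'a"
  assumes sG: "selfadjoint G" and sA: "selfadjoint A" and nonneg: "nonneg_op (G \<circ> A \<circ> G)"
    and l: "l \<noteq> 0" and unit: "\<And>n. norm (x n) = 1"
    and approx: "(\<lambda>n. A (G (x n)) - l *\<^sub>C x n) \<longlonglongrightarrow> 0"
  shows "\<exists>\<delta>>0. eventually (\<lambda>n. \<delta> < Re (l * cinner (G (x n)) (x n))) sequentially"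
    and "(\<lambda>n. Im (l * cinner (G (x n)) (x n))) \<longlonglongrightarrow> 0"
proof -
  interpret A: bounded_linear A by (rule bounded_op_bounded_linear[OF selfadjoint_bounded_op[OF sA]])
  interpret G: bounded_linear G by (rule bounded_op_bounded_linear[OF selfadjoint_bounded_op[OF sG]])
  interpret P: bounded_linear "\<lambda>x. G (A (G x))"
    by (intro bounded_linear_compose[OF G.bounded_linear_axioms]
        bounded_linear_compose[OF A.bounded_linear_axioms] G.bounded_linear_axioms)
  obtain KA where KA: "KA > 0" "\<And>x. norm (A x) \<le> norm x * KA" using A.pos_bounded by blast
  obtain KG where KG: "KG > 0" "\<And>x. norm (G x) \<le> norm x * KG" using G.pos_bounded by blast
  obtain KP where KP: "KP > 0" "\<And>x. norm (G (A (G x))) \<le> norm x * KP" using P.pos_bounded by blast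
  have q_real: "Im (cinner (G (A (G y))) y) = 0" and q_nonneg: "0 \<le> Re (cinner (G (A (G y))) y)" for y
    using nonneg unfolding nonneg_op_def by (auto simp: complex_is_Real_iff)
  have P_le: "(norm (G (A (G y))))^2 \<le> KP * Re (cinner (G (A (G y))) y)" for y
    by (rule nonneg_sym_norm_sq_le[OF P.bounded_linear_axioms _ KP q_nonneg])
      (simp add: selfadjoint_sym[OF sA] selfadjoint_sym[OF sG])
  define e where "e n = norm (A (G (x n)) - l *\<^sub>C x n)" for n
  define c where "c n = cinner (A (G (x n)) - l *\<^sub>C x n) (G (x n))" for n
  define q where "q n = cinner (G (A (G (x n)))) (x n)" for n
  have ls: "l * cinner (G (x n)) (x n) = q n - c n" for n
    using form_defect_identity[OF sG, of A "x n" l] by (simp add: q_def c_def)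
  have e: "e \<longlonglongrightarrow> 0" unfolding e_def using approx by (rule tendsto_norm_zero)
  have "cmod (c n) \<le> e n * KG" for n
  proof -
    have "cmod (c n) \<le> e n * norm (G (x n))" unfolding c_def e_def by (rule cinner_Cauchy_Schwarz)
    also have "\<dots> \<le> e n * KG" using KG(2)[of "x n"] unit[of n] by (simp add: e_def mult_left_mono)
    finally show ?thesis .
  qed
  then have c: "c \<longlonglongrightarrow> 0" by (intro tendsto_0_le[OF e, where K=KG]) (simp add: e_def always_eventually)
  define m where "m = (cmod l)^2 / (2 * KA)"
  have m: "m > 0" using l KA(1) by (simp add: m_def)
  then have m_less: "m < (cmod l)^2 / KA" by (simp add: m_def field_simps)
  have lower: "((cmod l)^2 - cmod l * e n) / KA - KG * e n \<le> norm (G (A (G (x n))))" for n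
    using eigen_defect_lower_bound[OF selfadjoint_bounded_op[OF sG] KA(2) _ KG(2) unit[of n], where l=l] KA(1)
    by (simp add: e_def pos_divide_le_eq algebra_simps)
  have "(\<lambda>n. ((cmod l)^2 - cmod l * e n) / KA - KG * e n)
          \<longlonglongrightarrow> ((cmod l)^2 - cmod l * 0) / KA - KG * 0"
    using KA(1) by (intro tendsto_intros e) simp
  then have "eventually (\<lambda>n. m < ((cmod l)^2 - cmod l * e n) / KA - KG * e n) sequentially"
    using m_less by (intro order_tendstoD(1)) simp_all
  then have q_lower: "eventually (\<lambda>n. m^2 / KP < Re (q n)) sequentially"
  proof (rule eventually_mono)
    fix n assume "m < ((cmod l)^2 - cmod l * e n) / KA - KG * e n"
    then have "m < norm (G (A (G (x n))))" using lower[of n] by linarith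
    then have "m^2 < (norm (G (A (G (x n)))))^2" using m by (intro power_strict_mono) auto
    then have "m^2 < KP * Re (q n)" using P_le[of "x n"] by (simp add: q_def)
    then show "m^2 / KP < Re (q n)" using KP(1) by (simp add: pos_divide_less_eq mult.commute)
  qed
  have \<delta>: "m^2 / (2 * KP) > 0" using m KP(1) by (intro divide_pos_pos) auto
  have "(\<lambda>n. Re (c n)) \<longlonglongrightarrow> Re 0" by (intro tendsto_intros c)
  then have "eventually (\<lambda>n. Re (c n) < m^2 / (2 * KP)) sequentially"
    using \<delta> by (intro order_tendstoD(2)) simp_all
  with q_lower have "eventually (\<lambda>n. m^2 / (2 * KP) < Re (l * cinner (G (x n)) (x n))) sequentially"
  proof eventually_elim
    case (elim n)
    have "m^2 / KP = m^2 / (2 * KP) + m^2 / (2 * KP)" by (simp add: field_simps)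
    then show ?case using elim by (simp add: ls)
  qed
  then show "\<exists>\<delta>>0. eventually (\<lambda>n. \<delta> < Re (l * cinner (G (x n)) (x n))) sequentially"
    using \<delta> by blast
  have "(\<lambda>n. - Im (c n)) \<longlonglongrightarrow> - Im 0" by (intro tendsto_intros c)
  then show "(\<lambda>n. Im (l * cinner (G (x n)) (x n))) \<longlonglongrightarrow> 0"
    by (simp add: ls q_def q_real)
qed

subsection \<open>Spectral consequences for A G\<close>

text \<open>Non-real points are never in the approximate point spectrum of A G: there
  [x n, x n] is real, so vanishing of the imaginary part of l [x n, x n] forces
  [x n, x n] to tend to zero, contradicting the lower bound on its real part.\<close>

lemma nonreal_not_ap_spectrum:
  fixes G A :: "'a::complex_hilbert \<Rightarrow> 'a"
  assumes sG: "selfadjoint G" and sA: "selfadjoint A" and nonneg: "nonneg_op (G \<circ> A \<circ> G)"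
    and l: "l \<notin> \<real>"
  shows "l \<notin> ap_spectrum (A \<circ> G)"
proof
  assume "l \<in> ap_spectrum (A \<circ> G)"
  then obtain x where unit: "\<And>n. norm (x n) = 1"
    and approx: "(\<lambda>n. A (G (x n)) - l *\<^sub>C x n) \<longlonglongrightarrow> 0"
    unfolding ap_spectrum_def by auto
  have "l \<noteq> 0" and Im_l: "Im l \<noteq> 0" using l by (auto simp: complex_is_Real_iff)
  define s where "s n = Re (cinner (G (x n)) (x n))" for n
  have ls: "l * cinner (G (x n)) (x n) = l * of_real (s n)" for n
    using selfadjoint_form_real[OF sG] by (simp add: s_def complex_eq_iff)
  note bounded_away = approx_eigen_form_bounded_away[OF sG sA nonneg \<open>l \<noteq> 0\<close> unit approx]
  have "(\<lambda>n. Im l * s n) \<longlonglongrightarrow> 0" using bounded_away(2) by (simp add: ls)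
  then have "(\<lambda>n. Im l * s n / Im l) \<longlonglongrightarrow> 0 / Im l" using Im_l by (intro tendsto_divide) auto
  then have "s \<longlonglongrightarrow> 0" using Im_l by simp
  then have "(\<lambda>n. Re l * s n) \<longlonglongrightarrow> Re l * 0" by (intro tendsto_intros)
  moreover obtain \<delta> where "\<delta> > 0" and above: "eventually (\<lambda>n. \<delta> < Re l * s n) sequentially"
    using bounded_away(1) by (auto simp: ls)
  ultimately have "eventually (\<lambda>n. Re l * s n < \<delta>) sequentially"
    by (intro order_tendstoD(2)) simp_all
  with above have "eventually (\<lambda>n. False) sequentially" by eventually_elim simp
  then show False by simp
qed

text \<open>A nonzero point l such that neither l nor its conjugate lies in the approximate
  point spectrum of A G is in the resolvent set: A G - l is bounded below, and the
  formal adjoint G A - cnj l is injective because A maps its kernel into the kernel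
  of A G - cnj l.\<close>

lemma not_in_spectrum_if_not_ap:
  fixes G A :: "'a::complex_hilbert \<Rightarrow> 'a"
  assumes sG: "selfadjoint G" and sA: "selfadjoint A" and l: "l \<noteq> 0"
    and not_ap: "l \<notin> ap_spectrum (A \<circ> G)" and not_ap_cnj: "cnj l \<notin> ap_spectrum (A \<circ> G)"
  shows "l \<notin> op_spectrum (A \<circ> G)"
proof -
  have T: "bounded_op (A \<circ> G)"
    by (rule bounded_op_comp[OF selfadjoint_bounded_op[OF sA] selfadjoint_bounded_op[OF sG]])
  obtain c where c: "c > 0" "\<And>x. c * norm x \<le> norm ((A \<circ> G) x - l *\<^sub>C x)"
    using not_ap_spectrum_bounded_below[OF T not_ap] by blast
  obtain c' where c': "c' > 0" "\<And>x. c' * norm x \<le> norm ((A \<circ> G) x - cnj l *\<^sub>C x)"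
    using not_ap_spectrum_bounded_below[OF T not_ap_cnj] by blast
  show ?thesis
  proof (rule not_in_spectrum_if_bounded_below[OF T _ c, where S="G \<circ> A"])
    show "cinner ((A \<circ> G) x) y = cinner x ((G \<circ> A) y)" for x y
      by (simp add: selfadjoint_sym[OF sA] selfadjoint_sym[OF sG])
    fix y assume y: "(G \<circ> A) y = cnj l *\<^sub>C y"
    then have "(A \<circ> G) (A y) = cnj l *\<^sub>C A y"
      by (simp add: bounded_op_scaleC[OF selfadjoint_bounded_op[OF sA]])
    then have "A y = 0" using c'(1) c'(2)[of "A y"] by (simp add: mult_le_0_iff)
    then have "cnj l *\<^sub>C y = 0"
      using y bounded_op_bounded_linear[OF selfadjoint_bounded_op[OF sG]] by (simp add: linear_simps)
    then have "cmod (cnj l) * norm y = 0" by (metis norm_scaleC norm_zero)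
    then show "y = 0" using l by simp
  qed
qed

lemma real_approx_eigen_sign:
  fixes G A :: "'a::complex_hilbert \<Rightarrow> 'a"
  assumes sG: "selfadjoint G" and sA: "selfadjoint A" and nonneg: "nonneg_op (G \<circ> A \<circ> G)"
    and l: "l \<in> \<real>" "l \<noteq> 0" and unit: "\<forall>n. norm (x n) = 1"
    and approx: "(\<lambda>n. (A \<circ> G) (x n) - l *\<^sub>C x n) \<longlonglongrightarrow> 0"
  shows "\<exists>\<delta>>0. eventually (\<lambda>n. \<delta> < Re l * Re (cinner (G (x n)) (x n))) sequentially"
  using approx_eigen_form_bounded_away(1)[OF sG sA nonneg l(2)] unit approx l(1)
  by (simp add: complex_is_Real_iff)

lemma liminf_ereal_pos:
  assumes "t > 0" and "eventually (\<lambda>n. t < f n) sequentially"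
  shows "0 < liminf (\<lambda>n. ereal (f n))"
proof -
  have "ereal t \<le> liminf (\<lambda>n. ereal (f n))"
    unfolding le_Liminf_iff
  proof (intro allI impI)
    fix y assume "y < ereal t"
    show "eventually (\<lambda>n. y < ereal (f n)) sequentially"
      using assms(2) by eventually_elim (use \<open>y < ereal t\<close> in \<open>auto intro: order.strict_trans\<close>)
  qed
  moreover have "0 < ereal t" using assms(1) by simp
  ultimately show ?thesis by (rule order.strict_trans2[rotated])
qed

lemma limsup_ereal_neg:
  assumes "t < 0" and "eventually (\<lambda>n. f n < t) sequentially"
  shows "limsup (\<lambda>n. ereal (f n)) < 0"
proof -
  have "limsup (\<lambda>n. ereal (f n)) \<le> ereal t"
    unfolding Limsup_le_iff
  proof (intro allI impI)
    fix y assume "ereal t < y"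
    show "eventually (\<lambda>n. ereal (f n) < y) sequentially"
      using assms(2) by eventually_elim (rule order.strict_trans[OF _ \<open>ereal t < y\<close>], simp)
  qed
  moreover have "ereal t < 0" using assms(1) by simp
  ultimately show ?thesis by (rule order.strict_trans1)
qed

lemma positive_ap_in_sigma_pp:
  fixes G A :: "'a::complex_hilbert \<Rightarrow> 'a"
  assumes sG: "selfadjoint G" and sA: "selfadjoint A" and nonneg: "nonneg_op (G \<circ> A \<circ> G)"
    and l: "l \<in> \<real>" "Re l > 0" and ap: "l \<in> ap_spectrum (A \<circ> G)"
  shows "l \<in> sigma_pp G (A \<circ> G)"
  unfolding sigma_pp_def
proof (intro CollectI conjI allI impI ap)
  fix x assume x: "(\<forall>n. norm (x n) = 1) \<and> (\<lambda>n. (A \<circ> G) (x n) - l *\<^sub>C x n) \<longlonglongrightarrow> 0"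
  have "l \<noteq> 0" using l(2) by auto
  then obtain \<delta> where "\<delta> > 0" and "eventually (\<lambda>n. \<delta> < Re l * Re (cinner (G (x n)) (x n))) sequentially"
    using real_approx_eigen_sign[OF sG sA nonneg l(1)] x by blast
  then have "eventually (\<lambda>n. \<delta> / Re l < Re (cinner (G (x n)) (x n))) sequentially"
    using l(2) by (auto elim!: eventually_mono simp: pos_divide_less_eq mult.commute)
  then show "0 < liminf (\<lambda>n. ereal (Re (cinner (G (x n)) (x n))))"
    using \<open>\<delta> > 0\<close> l(2) by (intro liminf_ereal_pos) auto
qed

lemma negative_ap_in_sigma_mm:
  fixes G A :: "'a::complex_hilbert \<Rightarrow> 'a"
  assumes sG: "selfadjoint G" and sA: "selfadjoint A" and nonneg: "nonneg_op (G \<circ> A \<circ> G)"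
    and l: "l \<in> \<real>" "Re l < 0" and ap: "l \<in> ap_spectrum (A \<circ> G)"
  shows "l \<in> sigma_mm G (A \<circ> G)"
  unfolding sigma_mm_def
proof (intro CollectI conjI allI impI ap)
  fix x assume x: "(\<forall>n. norm (x n) = 1) \<and> (\<lambda>n. (A \<circ> G) (x n) - l *\<^sub>C x n) \<longlonglongrightarrow> 0"
  have "l \<noteq> 0" using l(2) by auto
  then obtain \<delta> where "\<delta> > 0" and "eventually (\<lambda>n. \<delta> < Re l * Re (cinner (G (x n)) (x n))) sequentially"
    using real_approx_eigen_sign[OF sG sA nonneg l(1)] x by blast
  then have "eventually (\<lambda>n. Re (cinner (G (x n)) (x n)) < \<delta> / Re l) sequentially"
    using l(2) by (auto elim!: eventually_mono simp: neg_less_divide_eq mult.commute)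
  then show "limsup (\<lambda>n. ereal (Re (cinner (G (x n)) (x n)))) < 0"
    using \<open>\<delta> > 0\<close> l(2) by (intro limsup_ereal_neg) (auto simp: divide_pos_neg)
qed

theorem propositionp:
  fixes G A :: "'a::complex_hilbert \<Rightarrow> 'a"
  assumes "selfadjoint G" and "selfadjoint A" and "nonneg_op (G \<circ> A \<circ> G)"
  shows "bounded_op (A \<circ> G) \<and> (\<forall>x y. cinner (G ((A \<circ> G) x)) y = cinner (G x) ((A \<circ> G) y))
    \<and> op_spectrum (A \<circ> G) \<subseteq> \<real>
    \<and> {l. l \<in> \<real> \<and> Re l > 0} \<inter> op_spectrum (A \<circ> G) \<subseteq> sigma_pp G (A \<circ> G)
    \<and> {l. l \<in> \<real> \<and> Re l < 0} \<inter> op_spectrum (A \<circ> G) \<subseteq> sigma_mm G (A \<circ> G)"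
proof -
  note sG = assms(1) and sA = assms(2) and nonneg = assms(3)
  have bounded: "bounded_op (A \<circ> G)"
    by (rule bounded_op_comp[OF selfadjoint_bounded_op[OF sA] selfadjoint_bounded_op[OF sG]])
  have symmetric: "\<forall>x y. cinner (G ((A \<circ> G) x)) y = cinner (G x) ((A \<circ> G) y)"
    by (simp add: selfadjoint_sym[OF sA] selfadjoint_sym[OF sG])
  have real: "op_spectrum (A \<circ> G) \<subseteq> \<real>"
  proof
    fix l assume l: "l \<in> op_spectrum (A \<circ> G)"
    show "l \<in> \<real>"
    proof (rule ccontr)
      assume nonreal: "l \<notin> \<real>"
      then have "l \<noteq> 0" and "cnj l \<notin> \<real>" by (auto simp: Reals_cnj_iff)
      then show False using l nonreal not_in_spectrum_if_not_ap[OF sG sA]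
          nonreal_not_ap_spectrum[OF sG sA nonneg] by blast
    qed
  qed
  text \<open>For real l we have cnj l = l, so a nonzero real spectral point is an approximate eigenvalue.\<close>
  have ap: "l \<in> ap_spectrum (A \<circ> G)" if "l \<in> \<real>" "l \<noteq> 0" "l \<in> op_spectrum (A \<circ> G)" for l
  proof -
    have "cnj l = l" using that(1) by (simp add: Reals_cnj_iff)
    then show ?thesis using not_in_spectrum_if_not_ap[OF sG sA that(2)] that(3) by auto
  qed
  have "l \<in> sigma_pp G (A \<circ> G)" if "l \<in> \<real>" "Re l > 0" "l \<in> op_spectrum (A \<circ> G)" for l
    using positive_ap_in_sigma_pp[OF sG sA nonneg that(1,2)] ap that by force
  moreover have "l \<in> sigma_mm G (A \<circ> G)" if "l \<in> \<real>" "Re l < 0" "l \<in> op_spectrum (A \<circ> G)" for l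
    using negative_ap_in_sigma_mm[OF sG sA nonneg that(1,2)] ap that by force
  ultimately show ?thesis using bounded symmetric real by blast
qed

end
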